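(* Let $a,b,c,e$ be positive integers with $e\leqslant c$. If there exists an $\mathrm{IHS}(a,be;c)$, then there exists an integer Heffter array $\mathrm{H}(ac,bc;be,ae)$.
   Context: An integer Heffter array set $\mathrm{IHS}(m,n;c)$ is a collection of $c$ completely filled $m\times n$ arrays with integer entries such that the absolute values of all $mnc$ entries (taken over all $c$ arrays) are exactly $1,2,\ldots,mnc$, each occurring exactly once, and in every array the entries of each row and of each column sum to $0$. An integer Heffter array $\mathrm{H}(m,n;s,k)$ is an $m\times n$ partially filled array whose entries are integers from $\{\pm1,\ldots,\pm nk\}$ such that each row contains exactly $s$ filled cells, each column contains exactly $k$ filled cells, no two entries have the same absolute value, and the entries of every row and every column sum to $0$. *)

theory Defs
  imports Main
begin

definition IHS :: "nat \<Rightarrow> nat \<Rightarrow> nat \<Rightarrow> (nat \<Rightarrow> nat \<Rightarrow> nat \<Rightarrow> int) \<Rightarrow> bool" where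
  "IHS m n c A \<longleftrightarrow>
     bij_betw (\<lambda>(t, i, j). \<bar>A t i j\<bar>) ({..<c} \<times> {..<m} \<times> {..<n}) (int ` {1..m*n*c})
   \<and> (\<forall>t<c. \<forall>i<m. (\<Sum>j<n. A t i j) = 0)
   \<and> (\<forall>t<c. \<forall>j<n. (\<Sum>i<m. A t i j) = 0)"

definition cellval :: "int option \<Rightarrow> int" where
  "cellval x = (case x of None \<Rightarrow> 0 | Some v \<Rightarrow> v)"

text \<open>An integer Heffter array H(m,n;s,k): partially filled m x n array,
  H i j = None meaning the cell is empty.\<close>
definition Heffter :: "nat \<Rightarrow> nat \<Rightarrow> nat \<Rightarrow> nat \<Rightarrow> (nat \<Rightarrow> nat \<Rightarrow> int option) \<Rightarrow> bool" where
  "Heffter m n s k H \<longleftrightarrow>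
     (\<forall>i<m. \<forall>j<n. \<forall>x. H i j = Some x \<longrightarrow> x \<noteq> 0 \<and> \<bar>x\<bar> \<le> int (n * k))
   \<and> (\<forall>i<m. card {j. j < n \<and> H i j \<noteq> None} = s)
   \<and> (\<forall>j<n. card {i. i < m \<and> H i j \<noteq> None} = k)
   \<and> inj_on (\<lambda>(i, j). \<bar>the (H i j)\<bar>) {(i, j). i < m \<and> j < n \<and> H i j \<noteq> None}
   \<and> (\<forall>i<m. (\<Sum>j<n. cellval (H i j)) = 0)
   \<and> (\<forall>j<n. (\<Sum>i<m. cellval (H i j)) = 0)"

end

theory Submission
  imports Defs
begin

text \<open>Cut each array \<open>A\<^sub>t\<close> of the \<open>IHS(a, be; c)\<close> into \<open>e\<close> vertical strips of width \<open>b\<close>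
  and view the \<open>ac \<times> bc\<close> array as a \<open>c \<times> c\<close> grid of \<open>a \<times> b\<close> blocks. Block \<open>(t, u)\<close> holds
  strip number \<open>(u - t) mod c\<close> of \<open>A\<^sub>t\<close> if that number is below \<open>e\<close>, and is empty otherwise.
  Block row \<open>t\<close> thus carries every strip of \<open>A\<^sub>t\<close> exactly once, so its rows are the rows
  of \<open>A\<^sub>t\<close> padded with empty cells; block column \<open>u\<close> meets \<open>e\<close> filled blocks, each a full
  set of \<open>a\<close> column segments of some \<open>A\<^sub>t\<close>, hence it sums to zero as well. The entries are
  those of the IHS, each used once.\<close>

lemma sum_lessThan_mult_nat:
  fixes f :: "nat \<Rightarrow> 'a::comm_monoid_add"
  shows "(\<Sum>k<m * n. f k) = (\<Sum>q<m. \<Sum>r<n. f (q * n + r))"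
proof -
  have "(\<Sum>k\<in>{q * n..<q * n + n}. f k) = (\<Sum>r<n. f (q * n + r))" for q
    using sum.shift_bounds_nat_ivl[of f 0 "q * n" n] by (simp add: atLeast0LessThan add.commute)
  then show ?thesis by (simp add: sum.nat_group[symmetric])
qed

lemma mult_add_less_mult:
  fixes s e j b :: nat
  assumes "s < e" and "j < b"
  shows "s * b + j < e * b"
proof -
  have "s * b + j < Suc s * b"
    using assms(2) by simp
  also have "\<dots> \<le> e * b"
    using assms(1) by (intro mult_le_mono1) simp
  finally show ?thesis .
qed

lemma card_lessThan_not_None:
  "card {j. j < (n::nat) \<and> X j \<noteq> None} = (\<Sum>j<n. if X j = None then 0 else 1::nat)"
proof -
  have "card {j. j < n \<and> X j \<noteq> None} = (\<Sum>j\<in>{j \<in> {..<n}. X j \<noteq> None}. 1)"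
    by (simp add: conj_commute)
  also have "\<dots> = (\<Sum>j<n. if X j = None then 0 else 1)"
    by (subst sum.inter_filter) (auto intro: sum.cong)
  finally show ?thesis .
qed

lemma sum_bij_betw_if_less:
  fixes f :: "nat \<Rightarrow> 'a::comm_monoid_add"
  assumes "bij_betw h {..<c} {..<c}" and "e \<le> c"
  shows "(\<Sum>u<c. if h u < e then f (h u) else 0) = (\<Sum>s<e. f s)"
proof -
  have "(\<Sum>u<c. if h u < e then f (h u) else 0) = (\<Sum>s<c. if s < e then f s else 0)"
    using sum.reindex_bij_betw[OF assms(1), of "\<lambda>s. if s < e then f s else 0"] by simp
  also have "\<dots> = (\<Sum>s\<in>{s \<in> {..<c}. s < e}. f s)"
    by (rule sum.inter_filter[symmetric]) simp
  also have "{s \<in> {..<c}. s < e} = {..<e}"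
    using assms(2) by auto
  finally show ?thesis .
qed

text \<open>For \<open>t, u < c\<close> this is \<open>(u - t) mod c\<close>.\<close>
definition cyclic_diff :: "nat \<Rightarrow> nat \<Rightarrow> nat \<Rightarrow> nat" where
  "cyclic_diff c t u = (if t \<le> u then u - t else u + c - t)"

lemma bij_betw_cyclic_diff_right:
  assumes "t < c"
  shows "bij_betw (cyclic_diff c t) {..<c} {..<c}"
proof (rule bij_betw_imageI)
  show "inj_on (cyclic_diff c t) {..<c}"
    unfolding inj_on_def cyclic_diff_def using assms by auto
  have "s \<in> cyclic_diff c t ` {..<c}" if "s < c" for s
    using that assms
    by (intro image_eqI[where x = "if s + t < c then s + t else s + t - c"])
       (auto simp: cyclic_diff_def)
  then show "cyclic_diff c t ` {..<c} = {..<c}"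
    using assms by (auto simp: cyclic_diff_def)
qed

lemma bij_betw_cyclic_diff_left:
  assumes "u < c"
  shows "bij_betw (\<lambda>t. cyclic_diff c t u) {..<c} {..<c}"
proof (rule bij_betw_imageI)
  show "inj_on (\<lambda>t. cyclic_diff c t u) {..<c}"
    unfolding inj_on_def cyclic_diff_def using assms by auto
  have "s \<in> (\<lambda>t. cyclic_diff c t u) ` {..<c}" if "s < c" for s
    using that assms
    by (intro image_eqI[where x = "if s \<le> u then u - s else u + c - s"])
       (auto simp: cyclic_diff_def)
  then show "(\<lambda>t. cyclic_diff c t u) ` {..<c} = {..<c}"
    using assms by (auto simp: cyclic_diff_def)
qed

definition ihs_to_heffter ::
    "nat \<Rightarrow> nat \<Rightarrow> nat \<Rightarrow> nat \<Rightarrow> (nat \<Rightarrow> nat \<Rightarrow> nat \<Rightarrow> int) \<Rightarrow> nat \<Rightarrow> nat \<Rightarrow> int option" where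
  "ihs_to_heffter a b c e A R C =
     (if cyclic_diff c (R div a) (C div b) < e
      then Some (A (R div a) (R mod a) (cyclic_diff c (R div a) (C div b) * b + C mod b))
      else None)"

definition ihs_source :: "nat \<Rightarrow> nat \<Rightarrow> nat \<Rightarrow> nat \<Rightarrow> nat \<Rightarrow> nat \<times> nat \<times> nat" where
  "ihs_source a b c R C = (R div a, R mod a, cyclic_diff c (R div a) (C div b) * b + C mod b)"

lemma ihs_to_heffter_eq_Some:
  "ihs_to_heffter a b c e A R C = Some x \<longleftrightarrow>
     cyclic_diff c (R div a) (C div b) < e \<and> x = (case ihs_source a b c R C of (t, i, k) \<Rightarrow> A t i k)"
  by (auto simp: ihs_to_heffter_def ihs_source_def)

lemma ihs_source_mem:
  assumes "R < a * c" and "C < b * c" and "cyclic_diff c (R div a) (C div b) < e"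
  shows "ihs_source a b c R C \<in> {..<c} \<times> {..<a} \<times> {..<b * e}"
proof -
  have "0 < a" "0 < b"
    using assms(1,2) by (auto intro: gr0I)
  then show ?thesis
    using assms mult_add_less_mult[OF assms(3), of "C mod b" b]
    by (simp add: ihs_source_def less_mult_imp_div_less mult.commute)
qed

lemma inj_on_ihs_source:
  "inj_on (\<lambda>(R, C). ihs_source a b c R C) {(R, C). R < a * c \<and> C < b * c}"
proof (rule inj_onI, clarsimp simp: ihs_source_def)
  fix R C R' C'
  assume R: "R < a * c" and C: "C < b * c" and C': "C' < b * c"
    and div: "R div a = R' div a" and mod: "R mod a = R' mod a"
    and k: "cyclic_diff c (R' div a) (C div b) * b + C mod b
          = cyclic_diff c (R' div a) (C' div b) * b + C' mod b"
  have "0 < b"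
    using C by (auto intro: gr0I)
  then have "cyclic_diff c (R' div a) (C div b) = cyclic_diff c (R' div a) (C' div b)"
    and mod_b: "C mod b = C' mod b"
    using arg_cong[OF k, of "\<lambda>x. x div b"] arg_cong[OF k, of "\<lambda>x. x mod b"] by simp_all
  moreover have "R div a < c" "C div b < c" "C' div b < c"
    using R C C' by (simp_all add: less_mult_imp_div_less mult.commute)
  ultimately have "C div b = C' div b"
    using bij_betw_cyclic_diff_right[of "R div a" c] div by (auto simp: bij_betw_def inj_on_def)
  with mod_b div mod show "R = R' \<and> C = C'"
    by (metis div_mult_mod_eq)
qed

lemma sum_row_ihs_to_heffter:
  fixes g :: "int option \<Rightarrow> 'a::comm_monoid_add"
  assumes "g None = 0" and "R < a * c" and "e \<le> c"
  shows "(\<Sum>C<b * c. g (ihs_to_heffter a b c e A R C))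
       = (\<Sum>k<b * e. g (Some (A (R div a) (R mod a) k)))"
proof -
  define t where "t = R div a"
  define row where "row k = g (Some (A t (R mod a) k))" for k
  have t: "t < c"
    using assms(2) by (simp add: t_def less_mult_imp_div_less mult.commute)
  have "(\<Sum>C<b * c. g (ihs_to_heffter a b c e A R C))
      = (\<Sum>u<c. \<Sum>j<b. g (ihs_to_heffter a b c e A R (u * b + j)))"
    by (simp add: mult.commute[of b] sum_lessThan_mult_nat)
  also have "\<dots> = (\<Sum>u<c. if cyclic_diff c t u < e
                           then (\<Sum>j<b. row (cyclic_diff c t u * b + j)) else 0)"
    by (intro sum.cong) (auto simp: ihs_to_heffter_def t_def row_def assms(1))
  also have "\<dots> = (\<Sum>s<e. \<Sum>j<b. row (s * b + j))"
    by (rule sum_bij_betw_if_less[OF bij_betw_cyclic_diff_right[OF t] assms(3)])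
  also have "\<dots> = (\<Sum>k<b * e. row k)"
    by (simp add: mult.commute[of b] sum_lessThan_mult_nat)
  finally show ?thesis by (simp add: row_def t_def)
qed

lemma sum_column_ihs_to_heffter:
  fixes g :: "int option \<Rightarrow> 'a::comm_monoid_add"
  assumes "g None = 0"
  shows "(\<Sum>R<a * c. g (ihs_to_heffter a b c e A R C))
       = (\<Sum>t<c. if cyclic_diff c t (C div b) < e
                 then (\<Sum>i<a. g (Some (A t i (cyclic_diff c t (C div b) * b + C mod b))))
                 else 0)"
proof -
  have "(\<Sum>R<a * c. g (ihs_to_heffter a b c e A R C))
      = (\<Sum>t<c. \<Sum>i<a. g (ihs_to_heffter a b c e A (t * a + i) C))"
    by (simp add: mult.commute[of a] sum_lessThan_mult_nat)
  also have "\<dots> = (\<Sum>t<c. if cyclic_diff c t (C div b) < e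
                 then (\<Sum>i<a. g (Some (A t i (cyclic_diff c t (C div b) * b + C mod b))))
                 else 0)"
  proof (rule sum.cong)
    fix t
    have "(\<Sum>i<a. g (ihs_to_heffter a b c e A (t * a + i) C))
        = (\<Sum>i<a. if cyclic_diff c t (C div b) < e
                   then g (Some (A t i (cyclic_diff c t (C div b) * b + C mod b))) else 0)"
      by (intro sum.cong) (auto simp: ihs_to_heffter_def assms)
    then show "(\<Sum>i<a. g (ihs_to_heffter a b c e A (t * a + i) C))
        = (if cyclic_diff c t (C div b) < e
           then (\<Sum>i<a. g (Some (A t i (cyclic_diff c t (C div b) * b + C mod b)))) else 0)"
      by simp
  qed simp
  finally show ?thesis .
qed

lemma ihs_to_heffter_entry_bound:
  assumes "IHS a (b * e) c A" and "R < a * c" and "C < b * c"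
    and "ihs_to_heffter a b c e A R C = Some x"
  shows "x \<noteq> 0 \<and> \<bar>x\<bar> \<le> int (b * c * (a * e))"
proof -
  obtain t i k where src: "ihs_source a b c R C = (t, i, k)"
    by (cases "ihs_source a b c R C") auto
  have x: "x = A t i k" and cd: "cyclic_diff c (R div a) (C div b) < e"
    using assms(4) src by (simp_all add: ihs_to_heffter_eq_Some)
  have "(t, i, k) \<in> {..<c} \<times> {..<a} \<times> {..<b * e}"
    using ihs_source_mem[OF assms(2,3) cd] unfolding src .
  moreover have "bij_betw (\<lambda>(t, i, k). \<bar>A t i k\<bar>) ({..<c} \<times> {..<a} \<times> {..<b * e})
      (int ` {1..a * (b * e) * c})"
    using assms(1) unfolding IHS_def by blast
  ultimately have "\<bar>x\<bar> \<in> int ` {1..a * (b * e) * c}"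
    unfolding x by (fastforce dest: bij_betwE)
  then show ?thesis
    by (auto simp: ac_simps simp del: of_nat_mult)
qed

lemma inj_on_abs_ihs_to_heffter:
  assumes "IHS a (b * e) c A"
  shows "inj_on (\<lambda>(R, C). \<bar>the (ihs_to_heffter a b c e A R C)\<bar>)
           {(R, C). R < a * c \<and> C < b * c \<and> ihs_to_heffter a b c e A R C \<noteq> None}"
    (is "inj_on ?f ?F")
proof -
  let ?D = "{..<c} \<times> {..<a} \<times> {..<b * e}"
  let ?absA = "\<lambda>(t, i, k). \<bar>A t i k\<bar>"
  have "inj_on ?absA ?D"
    using assms unfolding IHS_def bij_betw_def by blast
  moreover have "(\<lambda>(R, C). ihs_source a b c R C) ` ?F \<subseteq> ?D"
    using ihs_source_mem by (force simp: ihs_to_heffter_def split: if_splits)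
  ultimately have "inj_on (?absA \<circ> (\<lambda>(R, C). ihs_source a b c R C)) ?F"
    using inj_on_ihs_source[of a b c] by (intro comp_inj_on) (auto intro: inj_on_subset)
  moreover have "inj_on ?f ?F = inj_on (?absA \<circ> (\<lambda>(R, C). ihs_source a b c R C)) ?F"
    by (intro inj_on_cong)
       (auto simp: ihs_to_heffter_def ihs_source_def split: if_splits)
  ultimately show ?thesis
    by simp
qed

lemma card_row_ihs_to_heffter:
  assumes "R < a * c" and "e \<le> c"
  shows "card {C. C < b * c \<and> ihs_to_heffter a b c e A R C \<noteq> None} = b * e"
  unfolding card_lessThan_not_None
  using sum_row_ihs_to_heffter[of "\<lambda>x. if x = None then 0 else 1::nat" R a c e b A, OF _ assms]
  by simp

lemma card_column_ihs_to_heffter: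
  assumes "C < b * c" and "e \<le> c"
  shows "card {R. R < a * c \<and> ihs_to_heffter a b c e A R C \<noteq> None} = a * e"
proof -
  have "C div b < c"
    using assms(1) by (simp add: less_mult_imp_div_less mult.commute)
  have "card {R. R < a * c \<and> ihs_to_heffter a b c e A R C \<noteq> None}
      = (\<Sum>t<c. if cyclic_diff c t (C div b) < e then a else 0)"
    unfolding card_lessThan_not_None
    using sum_column_ihs_to_heffter[of "\<lambda>x. if x = None then 0 else 1::nat" a b c e A C]
    by (simp cong: if_cong)
  also have "\<dots> = e * a"
    using sum_bij_betw_if_less[OF bij_betw_cyclic_diff_left[OF \<open>C div b < c\<close>] assms(2),
        of "\<lambda>_. a"] by simp
  finally show ?thesis
    by simp
qed

lemma sum_row_ihs_to_heffter_eq_0: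
  assumes "IHS a (b * e) c A" and "R < a * c" and "e \<le> c"
  shows "(\<Sum>C<b * c. cellval (ihs_to_heffter a b c e A R C)) = 0"
proof -
  have "0 < a"
    using assms(2) by (auto intro: gr0I)
  then have "R div a < c" "R mod a < a"
    using assms(2) by (simp_all add: less_mult_imp_div_less mult.commute)
  then have "(\<Sum>k<b * e. A (R div a) (R mod a) k) = 0"
    using assms(1) by (simp add: IHS_def)
  then show ?thesis
    using sum_row_ihs_to_heffter[of cellval R a c e b A, OF _ assms(2,3)]
    by (simp add: cellval_def)
qed

lemma sum_column_ihs_to_heffter_eq_0:
  assumes "IHS a (b * e) c A" and "C < b * c"
  shows "(\<Sum>R<a * c. cellval (ihs_to_heffter a b c e A R C)) = 0"
proof -
  have "0 < b"
    using assms(2) by (auto intro: gr0I)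
  have "(\<Sum>i<a. A t i (cyclic_diff c t (C div b) * b + C mod b)) = 0"
    if "t < c" and "cyclic_diff c t (C div b) < e" for t
    using assms(1) that(1) mult_add_less_mult[OF that(2), of "C mod b" b] \<open>0 < b\<close>
    by (simp add: IHS_def mult.commute)
  then show ?thesis
    unfolding sum_column_ihs_to_heffter[of cellval, OF cellval_def[of None, simplified]]
    by (intro sum.neutral) (simp add: cellval_def)
qed

lemma Heffter_ihs_to_heffter:
  assumes "IHS a (b * e) c A" and "e \<le> c"
  shows "Heffter (a * c) (b * c) (b * e) (a * e) (ihs_to_heffter a b c e A)"
proof -
  let ?H = "ihs_to_heffter a b c e A"
  have "\<forall>R<a * c. \<forall>C<b * c. \<forall>x. ?H R C = Some x \<longrightarrow> x \<noteq> 0 \<and> \<bar>x\<bar> \<le> int (b * c * (a * e))"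
    using ihs_to_heffter_entry_bound[OF assms(1)] by blast
  moreover have "\<forall>R<a * c. card {C. C < b * c \<and> ?H R C \<noteq> None} = b * e"
    using card_row_ihs_to_heffter[OF _ assms(2)] by blast
  moreover have "\<forall>C<b * c. card {R. R < a * c \<and> ?H R C \<noteq> None} = a * e"
    using card_column_ihs_to_heffter[OF _ assms(2)] by blast
  moreover have "\<forall>R<a * c. (\<Sum>C<b * c. cellval (?H R C)) = 0"
    using sum_row_ihs_to_heffter_eq_0[OF assms(1) _ assms(2)] by blast
  moreover have "\<forall>C<b * c. (\<Sum>R<a * c. cellval (?H R C)) = 0"
    using sum_column_ihs_to_heffter_eq_0[OF assms(1)] by blast
  ultimately show ?thesis
    using inj_on_abs_ihs_to_heffter[OF assms(1)] unfolding Heffter_def by blast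
qed

theorem lemma4p1:
  fixes a b c e :: nat
  assumes "0 < a" and "0 < b" and "0 < c" and "0 < e" and "e \<le> c"
    and "\<exists>A. IHS a (b * e) c A"
  shows "\<exists>H. Heffter (a * c) (b * c) (b * e) (a * e) H"
  using assms(5,6) Heffter_ihs_to_heffter by blast

end
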